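(* Assume $S(w)\neq\emptyset$ for all $w\in\mathbb R^m$ and that $x\mapsto\max_{i}(f_i(x)-w_i)$ satisfies the growth property uniformly along approximating sequences. Let $w^*\in\mathbb R^m$ and $(w^k)_{k\ge0}\subseteq\mathbb R^m$ with $w^k\to w^*$. Then $(S(w^k))_{k\ge0}$ is Mosco convergent to $S(w^* )$.
   Context: $\mathcal H$ is a real Hilbert space; $f_1,\dots,f_m:\mathcal H\to\mathbb R$ are convex and continuously differentiable. For $w\in\mathbb R^m$, $S(w):=\operatorname{argmin}_{z\in\mathcal H}\max_{i=1,\dots,m}(f_i(z)-w_i)$ (a closed convex set). Growth property uniformly along approximating sequences: for every $w^*\in\mathbb R^m$ there is a strictly increasing $\psi:[0,\infty)\to[0,\infty)$ with $\psi(0)=0$ such that for every sequence $(w^k)\subseteq\mathbb R^m$ with $w^k\to w^*$, $\max_i(f_i(x^* )-w^k_i)-\inf_{z\in\mathcal H}\max_i(f_i(z)-w^k_i)\ge\psi(\operatorname{dist}(x^*,S(w^k)))$ for all $x^*\in S(w^* )$ and all $k\ge0$. Mosco convergence: nonempty closed convex sets $C^k$ are Mosco convergent to a nonempty closed convex $C^*$ if (i) for every $x^*\in C^*$ there exist $x^k\in C^k$ with $x^k\to x^*$ strongly, and (ii) whenever $(k_l)$ is a subsequence, $x^{k_l}\in C^{k_l}$ and $x^{k_l}\rightharpoonup x^*$ weakly, then $x^*\in C^*$. *)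

theory Defs
  imports "HOL-Analysis.Analysis"
begin

text \<open>Scalarized objective: x maps to max over i of (f i x - w i). The index set
  {1..m} is modelled by a finite type 'm; w in R^m is a function 'm to real.\<close>
definition scal :: "('m::finite \<Rightarrow> 'a \<Rightarrow> real) \<Rightarrow> ('m \<Rightarrow> real) \<Rightarrow> 'a \<Rightarrow> real" where
  "scal f w x = Max (range (\<lambda>i. f i x - w i))"

definition Sol :: "('m::finite \<Rightarrow> 'a \<Rightarrow> real) \<Rightarrow> ('m \<Rightarrow> real) \<Rightarrow> 'a set" where
  "Sol f w = {x. \<forall>z. scal f w x \<le> scal f w z}"

definition weakly_conv :: "(nat \<Rightarrow> 'a::real_inner) \<Rightarrow> 'a \<Rightarrow> bool" where
  "weakly_conv xs x \<longleftrightarrow> (\<forall>y. (\<lambda>k. inner (xs k) y) \<longlonglongrightarrow> inner x y)"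

definition mosco_conv :: "(nat \<Rightarrow> 'a::real_inner set) \<Rightarrow> 'a set \<Rightarrow> bool" where
  "mosco_conv C Cs \<longleftrightarrow>
     (\<forall>k. C k \<noteq> {} \<and> closed (C k) \<and> convex (C k)) \<and> Cs \<noteq> {} \<and> closed Cs \<and> convex Cs \<and>
     (\<forall>x\<in>Cs. \<exists>xs. (\<forall>k. xs k \<in> C k) \<and> xs \<longlonglongrightarrow> x) \<and>
     (\<forall>r xs x. strict_mono r \<longrightarrow> (\<forall>l. xs l \<in> C (r l)) \<longrightarrow> weakly_conv xs x \<longrightarrow> x \<in> Cs)"

definition uniform_growth :: "('m::finite \<Rightarrow> 'a::real_inner \<Rightarrow> real) \<Rightarrow> bool" where
  "uniform_growth f \<longleftrightarrow> (\<forall>ws::'m \<Rightarrow> real. \<exists>\<psi>::real \<Rightarrow> real.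
      strict_mono_on {0..} \<psi> \<and> \<psi> 0 = 0 \<and> (\<forall>t\<ge>0. \<psi> t \<ge> 0) \<and>
      (\<forall>wk::nat \<Rightarrow> ('m \<Rightarrow> real). wk \<longlonglongrightarrow> ws \<longrightarrow>
         (\<forall>x\<in>Sol f ws. \<forall>k.
            scal f (wk k) x - (INF z. scal f (wk k) z) \<ge> \<psi> (infdist x (Sol f (wk k))))))"

end

theory Submission
  imports Defs
begin

text \<open>The optimal value of the scalarized problem is 1-Lipschitz in w for the l1 distance,
  so a minimizer for w' is a 2 l1(w,w')-approximate minimizer for w. Hence every point of S(w*)
  is almost optimal for w^k, and the growth property turns this into infdist x S(w^k) \<rightarrow> 0,
  which is the strong approximation. Conversely, minimizers for w^k lie eventually in each
  sublevel set {scal w* \<le> min + e}; being closed and convex, these sets are weakly sequentially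
  closed (via the Hilbert projection), so weak cluster points are minimizers for w*.\<close>

definition l1_dist :: "('m::finite \<Rightarrow> real) \<Rightarrow> ('m \<Rightarrow> real) \<Rightarrow> real" where
  "l1_dist w w' = (\<Sum>i\<in>UNIV. \<bar>w i - w' i\<bar>)"

lemma l1_dist_commute: "l1_dist w w' = l1_dist w' w"
  unfolding l1_dist_def by (simp add: abs_minus_commute)

lemma tendsto_l1_dist_zero:
  fixes wk :: "nat \<Rightarrow> 'm::finite \<Rightarrow> real"
  assumes "wk \<longlonglongrightarrow> ws"
  shows "(\<lambda>k. l1_dist (wk k) ws) \<longlonglongrightarrow> 0"
proof -
  have coord: "(\<lambda>k. wk k i) \<longlonglongrightarrow> ws i" for i
    using continuous_on_product_coordinates assms by (rule continuous_on_tendsto_compose) auto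
  have "(\<lambda>k. l1_dist (wk k) ws) \<longlonglongrightarrow> (\<Sum>i\<in>UNIV. \<bar>ws i - ws i\<bar>)"
    unfolding l1_dist_def by (intro tendsto_intros coord)
  then show ?thesis by simp
qed

lemma component_le_scal: "f i x - w i \<le> scal f w x"
  unfolding scal_def by (rule Max_ge) auto

lemma scal_attained: "\<exists>i. scal f w x = f i x - w i"
proof -
  have "scal f w x \<in> range (\<lambda>i. f i x - w i)"
    unfolding scal_def by (rule Max_in) auto
  then show ?thesis by auto
qed

lemma scal_le_iff: "scal f w x \<le> c \<longleftrightarrow> (\<forall>i. f i x - w i \<le> c)"
  unfolding scal_def by (subst Max_le_iff) auto

lemma scal_le_scal_add_l1_dist: "scal f w x \<le> scal f w' x + l1_dist w w'"
proof -
  obtain i where i: "scal f w x = f i x - w i"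
    using scal_attained[of f w x] by blast
  have "\<bar>w i - w' i\<bar> \<le> l1_dist w w'"
    unfolding l1_dist_def by (rule member_le_sum) auto
  with i component_le_scal[of f i x w'] show ?thesis by linarith
qed

lemma INF_scal_eq: "s \<in> Sol f w \<Longrightarrow> (INF z. scal f w z) = scal f w s"
  unfolding Sol_def by (intro cInf_eq_minimum) auto

lemma scal_Sol_le_INF_add:
  assumes y: "y \<in> Sol f w'" and s: "s \<in> Sol f w"
  shows "scal f w y \<le> (INF z. scal f w z) + 2 * l1_dist w w'"
proof -
  have "scal f w y \<le> scal f w' y + l1_dist w w'"
    by (rule scal_le_scal_add_l1_dist)
  moreover have "scal f w' y \<le> scal f w' s"
    using y unfolding Sol_def by blast
  moreover have "scal f w' s \<le> scal f w s + l1_dist w w'"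
    using scal_le_scal_add_l1_dist[of f w' s w] by (simp add: l1_dist_commute)
  ultimately show ?thesis
    using INF_scal_eq[OF s] by linarith
qed

lemma Sol_eq_INT_sublevel: "Sol f w = (\<Inter>z. {x. scal f w x \<le> scal f w z})"
  unfolding Sol_def by blast

lemma scal_sublevel_eq: "{x. scal f w x \<le> c} = (\<Inter>i. {x. f i x \<le> c + w i})"
  by (auto simp: scal_le_iff algebra_simps)

lemma convex_sublevel:
  assumes "convex_on UNIV g"
  shows "convex {x. g x \<le> c}"
proof (rule convexI)
  fix x y u v assume "x \<in> {x. g x \<le> c}" "y \<in> {x. g x \<le> c}" "0 \<le> u" "0 \<le> v" "u + v = (1::real)"
  then show "u *\<^sub>R x + v *\<^sub>R y \<in> {x. g x \<le> c}"
    using convex_lower[OF assms, of x y u v] by simp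
qed

lemma closed_scal_sublevel:
  assumes "\<And>i. continuous_on UNIV (f i)"
  shows "closed {x. scal f w x \<le> c}"
  unfolding scal_sublevel_eq
  by (intro closed_INT ballI closed_Collect_le[OF assms continuous_on_const])

lemma convex_scal_sublevel:
  assumes "\<And>i. convex_on UNIV (f i)"
  shows "convex {x. scal f w x \<le> c}"
  unfolding scal_sublevel_eq by (rule convex_INT) (rule convex_sublevel[OF assms])

lemma closed_Sol:
  assumes "\<And>i. continuous_on UNIV (f i)"
  shows "closed (Sol f w)"
  unfolding Sol_eq_INT_sublevel by (intro closed_INT ballI closed_scal_sublevel[OF assms])

lemma convex_Sol:
  assumes "\<And>i. convex_on UNIV (f i)"
  shows "convex (Sol f w)"
  unfolding Sol_eq_INT_sublevel by (rule convex_INT) (rule convex_scal_sublevel[OF assms])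

lemma infdist_less_imp_dist_less:
  assumes "A \<noteq> {}" "infdist x A < r"
  shows "\<exists>a\<in>A. dist x a < r"
proof -
  have "Inf (dist x ` A) < r"
    using assms by (simp add: infdist_notempty)
  then show ?thesis
    using cInf_lessD[of "dist x ` A" r] \<open>A \<noteq> {}\<close> by blast
qed

lemma approximate_infdist_seq:
  assumes "\<And>k. C k \<noteq> {}"
  obtains xs where "\<And>k. xs k \<in> C k" "(\<lambda>k. dist x (xs k) - infdist x (C k)) \<longlonglongrightarrow> 0"
proof -
  have "\<forall>k. \<exists>a. a \<in> C k \<and> dist x a < infdist x (C k) + inverse (real (Suc k))"
  proof
    fix k
    have "infdist x (C k) < infdist x (C k) + inverse (real (Suc k))"
      by simp
    then show "\<exists>a. a \<in> C k \<and> dist x a < infdist x (C k) + inverse (real (Suc k))"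
      using infdist_less_imp_dist_less[OF assms] by blast
  qed
  from choice[OF this] obtain xs
    where xs: "\<forall>k. xs k \<in> C k \<and> dist x (xs k) < infdist x (C k) + inverse (real (Suc k))" ..
  have "(\<lambda>k. dist x (xs k) - infdist x (C k)) \<longlonglongrightarrow> 0"
  proof (rule tendsto_sandwich)
    show "\<forall>\<^sub>F k in sequentially. 0 \<le> dist x (xs k) - infdist x (C k)"
      using xs by (simp add: infdist_le)
    show "\<forall>\<^sub>F k in sequentially. dist x (xs k) - infdist x (C k) \<le> inverse (real (Suc k))"
      using xs by (simp add: less_imp_le algebra_simps)
  qed (simp_all add: LIMSEQ_inverse_real_of_nat del: of_nat_Suc)
  with xs that show thesis by blast
qed

lemma parallelogram_law:
  fixes x a b :: "'a::real_inner"
  shows "(norm (a - b))\<^sup>2 = 2 * (norm (x - a))\<^sup>2 + 2 * (norm (x - b))\<^sup>2 - 4 * (norm (x - midpoint a b))\<^sup>2"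
  unfolding power2_norm_eq_inner midpoint_def
  by (simp add: inner_commute algebra_simps)

lemma minimizing_seq_Cauchy:
  fixes x :: "'a::real_inner"
  assumes "convex C" and c: "\<And>n. c n \<in> C" and lim: "(\<lambda>n. dist x (c n)) \<longlonglongrightarrow> infdist x C"
  shows "Cauchy c"
proof (rule metric_CauchyI)
  fix eps :: real assume "eps > 0"
  define d where "d = infdist x C"
  define e where "e n = (dist x (c n))\<^sup>2 - d\<^sup>2" for n
  have "e \<longlonglongrightarrow> d\<^sup>2 - d\<^sup>2"
    unfolding e_def d_def by (intro tendsto_intros lim)
  then have "\<forall>\<^sub>F n in sequentially. e n < eps\<^sup>2 / 4"
    using \<open>eps > 0\<close> by (intro order_tendstoD) auto
  then obtain N where N: "\<And>n. n \<ge> N \<Longrightarrow> e n < eps\<^sup>2 / 4"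
    unfolding eventually_sequentially by blast
  have "dist (c m) (c n) < eps" if "m \<ge> N" "n \<ge> N" for m n
  proof -
    have "midpoint (c m) (c n) \<in> C"
      unfolding midpoint_def scaleR_add_right by (rule convexD) (use \<open>convex C\<close> c in auto)
    then have "d\<^sup>2 \<le> (norm (x - midpoint (c m) (c n)))\<^sup>2"
      using infdist_le[of _ C x] infdist_nonneg[of x C] unfolding d_def
      by (intro power_mono) (auto simp: dist_norm)
    then have "(norm (c m - c n))\<^sup>2 \<le> 2 * e m + 2 * e n"
      using parallelogram_law[of "c m" "c n" x] unfolding e_def dist_norm by (simp add: algebra_simps)
    also have "\<dots> < eps\<^sup>2"
      using N[OF that(1)] N[OF that(2)] by linarith
    finally have "norm (c m - c n) < eps"
      by (rule power_less_imp_less_base) (use \<open>eps > 0\<close> in simp)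
    then show ?thesis
      by (simp add: dist_norm)
  qed
  then show "\<exists>N. \<forall>m\<ge>N. \<forall>n\<ge>N. dist (c m) (c n) < eps"
    by blast
qed

lemma Hilbert_nearest_point_exists:
  fixes x :: "'a::{real_inner,complete_space}"
  assumes "closed C" "convex C" "C \<noteq> {}"
  obtains p where "p \<in> C" "\<forall>c\<in>C. dist x p \<le> dist x c"
proof -
  obtain c where c: "\<And>n. c n \<in> C" and gap: "(\<lambda>n. dist x (c n) - infdist x C) \<longlonglongrightarrow> 0"
    using approximate_infdist_seq[of "\<lambda>_. C" x] \<open>C \<noteq> {}\<close> by blast
  have lim: "(\<lambda>n. dist x (c n)) \<longlonglongrightarrow> infdist x C"
    using tendsto_add[OF gap tendsto_const[of "infdist x C"]] by simp
  obtain p where p: "c \<longlonglongrightarrow> p"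
    using minimizing_seq_Cauchy[OF \<open>convex C\<close> c lim] convergent_eq_Cauchy by blast
  have "p \<in> C"
    using closed_sequentially[OF \<open>closed C\<close>] c p by blast
  moreover have "dist x p = infdist x C"
    using tendsto_dist[OF tendsto_const p] lim LIMSEQ_unique by blast
  ultimately show thesis
    using that[of p] infdist_le[of _ C x] by simp
qed

lemma weakly_conv_closed_convex:
  fixes y :: "nat \<Rightarrow> 'a::{real_inner,complete_space}"
  assumes "closed C" "convex C" and ev: "\<forall>\<^sub>F l in sequentially. y l \<in> C"
    and weak: "weakly_conv y x"
  shows "x \<in> C"
proof -
  have "C \<noteq> {}"
    using eventually_happens[OF ev] by auto
  then obtain p where "p \<in> C" and near: "\<forall>c\<in>C. dist x p \<le> dist x c"
    using Hilbert_nearest_point_exists assms(1,2) by blast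
  have obtuse: "inner (c - p) (x - p) \<le> 0" if "c \<in> C" for c
    using any_closest_point_dot[OF assms(2,1) \<open>p \<in> C\<close> that near] by (simp add: inner_commute)
  have "(\<lambda>l. inner (y l - p) (x - p)) \<longlonglongrightarrow> inner (x - p) (x - p)"
    using weak unfolding weakly_conv_def by (simp add: inner_diff_left tendsto_diff)
  moreover have "\<forall>\<^sub>F l in sequentially. inner (y l - p) (x - p) \<le> 0"
    using ev by eventually_elim (rule obtuse)
  ultimately have "inner (x - p) (x - p) \<le> 0"
    by (rule tendsto_upperbound) simp
  then have "x = p"
    using inner_ge_zero[of "x - p"] by simp
  then show ?thesis
    using \<open>p \<in> C\<close> by simp
qed

lemma tendsto_zero_of_growth_bound:
  fixes \<psi> :: "real \<Rightarrow> real"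
  assumes \<psi>: "strict_mono_on {0..} \<psi>" "\<psi> 0 = 0"
    and D: "\<And>k. D k \<ge> 0" "\<And>k. \<psi> (D k) \<le> e k" and e: "e \<longlonglongrightarrow> 0"
  shows "D \<longlonglongrightarrow> 0"
proof (rule order_tendstoI)
  fix r :: real assume "r > 0"
  then have "\<psi> 0 < \<psi> r"
    by (intro strict_mono_onD[OF \<psi>(1)]) auto
  then have "\<psi> r > 0"
    using \<psi>(2) by simp
  with e have "\<forall>\<^sub>F k in sequentially. e k < \<psi> r"
    by (rule order_tendstoD(2))
  then show "\<forall>\<^sub>F k in sequentially. D k < r"
  proof eventually_elim
    case (elim k)
    show "D k < r"
    proof (rule ccontr)
      assume "\<not> D k < r"
      then have "\<psi> r \<le> \<psi> (D k)"
        using strict_mono_on_leD[OF \<psi>(1)] \<open>r > 0\<close> by simp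
      with elim D(2)[of k] show False by simp
    qed
  qed
next
  fix r :: real assume "r < 0"
  then have "r < D k" for k
    using D(1)[of k] by linarith
  then show "\<forall>\<^sub>F k in sequentially. r < D k"
    by simp
qed

lemma infdist_Sol_tendsto_zero:
  assumes nonempty: "\<And>w. Sol f w \<noteq> {}" and growth: "uniform_growth f"
    and conv: "wk \<longlonglongrightarrow> ws" and x: "x \<in> Sol f ws"
  shows "(\<lambda>k. infdist x (Sol f (wk k))) \<longlonglongrightarrow> 0"
proof -
  obtain \<psi> :: "real \<Rightarrow> real" where \<psi>: "strict_mono_on {0..} \<psi>" "\<psi> 0 = 0"
    and growth_ws: "\<forall>wk. wk \<longlonglongrightarrow> ws \<longrightarrow> (\<forall>x\<in>Sol f ws. \<forall>k.
      scal f (wk k) x - (INF z. scal f (wk k) z) \<ge> \<psi> (infdist x (Sol f (wk k))))"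
    using growth unfolding uniform_growth_def by blast
  have bound: "\<psi> (infdist x (Sol f (wk k))) \<le> scal f (wk k) x - (INF z. scal f (wk k) z)" for k
    using growth_ws conv x by blast
  have "\<psi> (infdist x (Sol f (wk k))) \<le> 2 * l1_dist (wk k) ws" for k
  proof -
    obtain s where "s \<in> Sol f (wk k)"
      using nonempty by blast
    from scal_Sol_le_INF_add[OF x this] bound[of k] show ?thesis
      by simp
  qed
  moreover have "(\<lambda>k. 2 * l1_dist (wk k) ws) \<longlonglongrightarrow> 0"
    using tendsto_mult_right_zero[OF tendsto_l1_dist_zero[OF conv]] .
  ultimately show ?thesis
    by (rule tendsto_zero_of_growth_bound[OF \<psi> infdist_nonneg])
qed

lemma tendsto_of_infdist_tendsto_zero:
  assumes "\<And>k. C k \<noteq> {}" "(\<lambda>k. infdist x (C k)) \<longlonglongrightarrow> 0"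
  shows "\<exists>xs. (\<forall>k. xs k \<in> C k) \<and> xs \<longlonglongrightarrow> x"
proof -
  obtain xs where xs: "\<And>k. xs k \<in> C k" and gap: "(\<lambda>k. dist x (xs k) - infdist x (C k)) \<longlonglongrightarrow> 0"
    using approximate_infdist_seq[of C x] assms(1) by blast
  have "(\<lambda>k. dist (xs k) x) \<longlonglongrightarrow> 0"
    using tendsto_add[OF gap assms(2)] by (simp add: dist_commute)
  then show ?thesis
    using xs tendsto_dist_iff by blast
qed

lemma weak_limit_Sol:
  fixes f :: "'m::finite \<Rightarrow> 'a::{real_inner, complete_space} \<Rightarrow> real"
  assumes cont: "\<And>i. continuous_on UNIV (f i)" and cvx: "\<And>i. convex_on UNIV (f i)"
    and nonempty: "Sol f ws \<noteq> {}" and conv: "vs \<longlonglongrightarrow> ws"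
    and ys: "\<And>l. ys l \<in> Sol f (vs l)" and weak: "weakly_conv ys x"
  shows "x \<in> Sol f ws"
proof -
  obtain s where s: "s \<in> Sol f ws"
    using nonempty by blast
  have "scal f ws x \<le> scal f ws s"
  proof (rule field_le_epsilon)
    fix e :: real assume "e > 0"
    have "(\<lambda>l. 2 * l1_dist (vs l) ws) \<longlonglongrightarrow> 0"
      using tendsto_mult_right_zero[OF tendsto_l1_dist_zero[OF conv]] .
    then have "\<forall>\<^sub>F l in sequentially. 2 * l1_dist (vs l) ws < e"
      using \<open>e > 0\<close> by (rule order_tendstoD(2))
    then have "\<forall>\<^sub>F l in sequentially. ys l \<in> {y. scal f ws y \<le> scal f ws s + e}"
    proof eventually_elim
      case (elim l)
      have "scal f ws (ys l) \<le> scal f ws s + 2 * l1_dist ws (vs l)"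
        using scal_Sol_le_INF_add[OF ys s] by (simp add: INF_scal_eq[OF s])
      with elim show ?case
        by (simp add: l1_dist_commute[of ws])
    qed
    then have "x \<in> {y. scal f ws y \<le> scal f ws s + e}"
      by (rule weakly_conv_closed_convex[OF closed_scal_sublevel[where f=f, OF cont]
            convex_scal_sublevel[where f=f, OF cvx] _ weak])
    then show "scal f ws x \<le> scal f ws s + e"
      by simp
  qed
  with s show ?thesis
    unfolding Sol_def by (auto intro: order_trans)
qed

theorem mainTheorem4:
  fixes f :: "'m::finite \<Rightarrow> 'a::{real_inner, complete_space} \<Rightarrow> real"
    and ws :: "'m \<Rightarrow> real" and wk :: "nat \<Rightarrow> ('m \<Rightarrow> real)"
  assumes cvx: "\<And>i. convex_on UNIV (f i)"
    and C1: "\<And>i. \<exists>f'. (\<forall>x. (f i has_derivative blinfun_apply (f' x)) (at x)) \<and> continuous_on UNIV f'"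
    and nonempty: "\<And>w. Sol f w \<noteq> {}"
    and growth: "uniform_growth f"
    and conv: "wk \<longlonglongrightarrow> ws"
  shows "mosco_conv (\<lambda>k. Sol f (wk k)) (Sol f ws)"
proof -
  have cont: "continuous_on UNIV (f i)" for i
  proof -
    obtain f' where "\<And>x. (f i has_derivative blinfun_apply (f' x)) (at x)"
      using C1[of i] by blast
    then show ?thesis
      by (intro continuous_at_imp_continuous_on ballI has_derivative_continuous)
  qed
  have strong: "\<exists>xs. (\<forall>k. xs k \<in> Sol f (wk k)) \<and> xs \<longlonglongrightarrow> x" if "x \<in> Sol f ws" for x
    using nonempty infdist_Sol_tendsto_zero[OF nonempty growth conv that]
    by (rule tendsto_of_infdist_tendsto_zero)
  have weak: "x \<in> Sol f ws"
    if "strict_mono r" "\<forall>l. ys l \<in> Sol f (wk (r l))" "weakly_conv ys x" for r ys x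
  proof (rule weak_limit_Sol[where f=f, OF cont cvx nonempty])
    show "(\<lambda>l. wk (r l)) \<longlonglongrightarrow> ws"
      using LIMSEQ_subseq_LIMSEQ[OF conv \<open>strict_mono r\<close>] by (simp add: o_def)
  qed (use that in auto)
  show ?thesis
    unfolding mosco_conv_def
    using nonempty closed_Sol[where f=f, OF cont] convex_Sol[where f=f, OF cvx] strong weak
    by simp
qed

end
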